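(* If $\mathbb{K}$ is an infinite field of characteristic $p>2$, then $I_p\subseteq T_2(E_{0^*}\otimes E_0)$.
   Context: $E$ is the Grassmann algebra of a vector space with countable basis $e_1,e_2,\dots$ (generated by the $e_i$ with $e_ie_j=-e_je_i$), with canonical $\mathbb{Z}_2$-grading $E=E^{(0)}\oplus E^{(1)}$ (even/odd length monomials). $A=E\otimes E$ has the $\mathbb{Z}_2\times\mathbb{Z}_2$-grading $A_{(a,b)}=E^{(a)}\otimes E^{(b)}$. $E_{0^*}\otimes E_0$ denotes $A$ with the $\mathbb{Z}_2$-grading $A_0=A_{(0,0)}\oplus A_{(1,0)}$, $A_1=A_{(0,1)}\oplus A_{(1,1)}$. $\mathbb{K}\langle Y\cup Z\rangle$ is the free associative algebra on disjoint countable sets $Y=\{y_1,\dots\}$ (degree $0$) and $Z=\{z_1,\dots\}$ (degree $1$). $T_2(A)$ is the set of $\mathbb{Z}_2$-graded identities: polynomials vanishing under every substitution of the $y_i$ by elements of $A_0$ and the $z_i$ by elements of $A_1$. A $T_2$-ideal is an ideal stable under all graded endomorphisms (sending $y_i$ to degree-$0$ and $z_i$ to degree-$1$ polynomials). Notation: $[a,b]=ab-ba$, $[a_1,\dots,a_n]=[[a_1,\dots,a_{n-1}],a_n]$, $a\circ b=ab+ba$. $I_p$ is the $T_2$-ideal generated by: (1) $[y_1,y_2,y_3]$, $[y_1,y_2,z_3]$; (2) $[y_1,z_2,y_3]$; (3) $[y_1,z_2]\circ z_3$; (4) $[z_1\circ z_2,z_3]$; (5) $(z_1\circ z_2)(z_3\circ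 z_4)-(z_1\circ z_3)(z_2\circ z_4)$; (6) $[x_1,y_2][y_3,x_4]+[x_1,y_3][y_2,x_4]$ for all choices $x_1\in\{y_1,z_1\}$, $x_4\in\{y_4,z_4\}$; (7) $[y_1,z_2](z_3\circ z_4)-[y_1,z_3](z_2\circ z_4)$; (8) $[y_1,z_1]\cdots[y_{2k-2},z_1](z_2\circ z_1)z_1^{2n}$ and (9) $[y_1,z_1]\cdots[y_{2k-1},z_1]z_1^{2n}$, for all integers $k\ge1$, $n\ge0$ with $2n+2k-1=p$. *)

theory Defs
  imports Main "HOL-Library.Poly_Mapping"
begin

datatype var = Y nat | Z nat   (* Y i has degree 0, Z i has degree 1 *)

text \<open>Noncommutative polynomials: finitely supported coefficient functions on words.\<close>
type_synonym 'k fpoly = "var list \<Rightarrow>\<^sub>0 'k"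

definition pconst :: "'k::ring_1 \<Rightarrow> 'k fpoly" where
  "pconst c = Poly_Mapping.single [] c"

definition pone :: "'k::ring_1 fpoly" where
  "pone = pconst 1"

definition pvar :: "var \<Rightarrow> 'k::ring_1 fpoly" where
  "pvar x = Poly_Mapping.single [x] 1"

abbreviation y :: "nat \<Rightarrow> 'k::ring_1 fpoly" where "y i \<equiv> pvar (Y i)"
abbreviation z :: "nat \<Rightarrow> 'k::ring_1 fpoly" where "z i \<equiv> pvar (Z i)"

definition pmul :: "'k::ring_1 fpoly \<Rightarrow> 'k fpoly \<Rightarrow> 'k fpoly" (infixl "\<odot>" 70) where
  "f \<odot> g = (\<Sum>u\<in>Poly_Mapping.keys f. \<Sum>v\<in>Poly_Mapping.keys g. Poly_Mapping.single (u @ v) (Poly_Mapping.lookup f u * Poly_Mapping.lookup g v))"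

definition pprod :: "'k::ring_1 fpoly list \<Rightarrow> 'k fpoly" where
  "pprod fs = foldr pmul fs pone"

definition pcomm :: "'k::ring_1 fpoly \<Rightarrow> 'k fpoly \<Rightarrow> 'k fpoly" where
  "pcomm a b = a \<odot> b - b \<odot> a"

definition pcirc :: "'k::ring_1 fpoly \<Rightarrow> 'k fpoly \<Rightarrow> 'k fpoly" where
  "pcirc a b = a \<odot> b + b \<odot> a"

definition pcomm3 :: "'k::ring_1 fpoly \<Rightarrow> 'k fpoly \<Rightarrow> 'k fpoly \<Rightarrow> 'k fpoly" where
  "pcomm3 a b c = pcomm (pcomm a b) c"

definition zcount :: "var list \<Rightarrow> nat" where
  "zcount w = length (filter (\<lambda>v. case v of Z _ \<Rightarrow> True | Y _ \<Rightarrow> False) w)"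

definition homogeneous :: "nat \<Rightarrow> 'k::ring_1 fpoly \<Rightarrow> bool" where
  "homogeneous d f \<longleftrightarrow> (\<forall>w\<in>Poly_Mapping.keys f. zcount w mod 2 = d)"

definition psubst :: "(var \<Rightarrow> 'k::ring_1 fpoly) \<Rightarrow> 'k fpoly \<Rightarrow> 'k fpoly" where
  "psubst \<sigma> f = (\<Sum>w\<in>Poly_Mapping.keys f. pconst (Poly_Mapping.lookup f w) \<odot> pprod (map \<sigma> w))"

definition graded_subst :: "(var \<Rightarrow> 'k::ring_1 fpoly) \<Rightarrow> bool" where
  "graded_subst \<sigma> \<longleftrightarrow> (\<forall>i. homogeneous 0 (\<sigma> (Y i)) \<and> homogeneous 1 (\<sigma> (Z i)))"

inductive_set T2_ideal :: "'k::ring_1 fpoly set \<Rightarrow> 'k fpoly set" for S where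
  gen: "f \<in> S \<Longrightarrow> f \<in> T2_ideal S"
| zero: "0 \<in> T2_ideal S"
| add: "f \<in> T2_ideal S \<Longrightarrow> g \<in> T2_ideal S \<Longrightarrow> f + g \<in> T2_ideal S"
| lmul: "f \<in> T2_ideal S \<Longrightarrow> g \<odot> f \<in> T2_ideal S"
| rmul: "f \<in> T2_ideal S \<Longrightarrow> f \<odot> g \<in> T2_ideal S"
| endo: "f \<in> T2_ideal S \<Longrightarrow> graded_subst \<sigma> \<Longrightarrow> psubst \<sigma> f \<in> T2_ideal S"

text \<open>Basis element e_S \<otimes> e_T (S, T finite sets of indices) is the key (S,T).\<close>
type_synonym 'k tgr = "(nat set \<times> nat set) \<Rightarrow>\<^sub>0 'k"

text \<open>e_S e_T = esign S T * e_(S \<union> T) in E (monomials written with increasing indices).\<close>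
definition esign :: "nat set \<Rightarrow> nat set \<Rightarrow> 'k::ring_1" where
  "esign S T = (if S \<inter> T = {} then (-1) ^ card {(s, t). s \<in> S \<and> t \<in> T \<and> t < s} else 0)"

definition amul :: "'k::ring_1 tgr \<Rightarrow> 'k tgr \<Rightarrow> 'k tgr" where
  "amul a b = (\<Sum>(S, T)\<in>Poly_Mapping.keys a. \<Sum>(S', T')\<in>Poly_Mapping.keys b.
      Poly_Mapping.single (S \<union> S', T \<union> T')
        (Poly_Mapping.lookup a (S, T) * Poly_Mapping.lookup b (S', T') * esign S S' * esign T T'))"

definition aconst :: "'k::ring_1 \<Rightarrow> 'k tgr" where
  "aconst c = Poly_Mapping.single ({}, {}) c"

definition aprod :: "'k::ring_1 tgr list \<Rightarrow> 'k tgr" where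
  "aprod as = foldr amul as (aconst 1)"

text \<open>The Z_2-grading of E_{0*} \<otimes> E_0: degree = parity of the second tensor factor.\<close>
definition A0 :: "'k::ring_1 tgr set" where
  "A0 = {a. \<forall>(S, T)\<in>Poly_Mapping.keys a. finite S \<and> finite T \<and> even (card T)}"

definition A1 :: "'k::ring_1 tgr set" where
  "A1 = {a. \<forall>(S, T)\<in>Poly_Mapping.keys a. finite S \<and> finite T \<and> odd (card T)}"

definition aeval :: "(var \<Rightarrow> 'k::ring_1 tgr) \<Rightarrow> 'k fpoly \<Rightarrow> 'k tgr" where
  "aeval \<phi> f = (\<Sum>w\<in>Poly_Mapping.keys f. amul (aconst (Poly_Mapping.lookup f w)) (aprod (map \<phi> w)))"

definition T2_id :: "'k::ring_1 fpoly set" where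
  "T2_id = {f. \<forall>\<phi>. (\<forall>i. \<phi> (Y i) \<in> A0 \<and> \<phi> (Z i) \<in> A1) \<longrightarrow> aeval \<phi> f = 0}"

definition gens :: "nat \<Rightarrow> 'k::ring_1 fpoly set" where
  "gens p =
     {pcomm3 (y 1) (y 2) (y 3), pcomm3 (y 1) (y 2) (z 3)}
   \<union> {pcomm3 (y 1) (z 2) (y 3)}
   \<union> {pcirc (pcomm (y 1) (z 2)) (z 3)}
   \<union> {pcomm (pcirc (z 1) (z 2)) (z 3)}
   \<union> {pcirc (z 1) (z 2) \<odot> pcirc (z 3) (z 4) - pcirc (z 1) (z 3) \<odot> pcirc (z 2) (z 4)}
   \<union> {pcomm x1 (y 2) \<odot> pcomm (y 3) x4 + pcomm x1 (y 3) \<odot> pcomm (y 2) x4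
       | x1 x4. x1 \<in> {y 1, z 1} \<and> x4 \<in> {y 4, z 4}}
   \<union> {pcomm (y 1) (z 2) \<odot> pcirc (z 3) (z 4) - pcomm (y 1) (z 3) \<odot> pcirc (z 2) (z 4)}
   \<union> {pprod (map (\<lambda>i. pcomm (y i) (z 1)) [1..<2*k-1]) \<odot> pcirc (z 2) (z 1)
         \<odot> pprod (replicate (2*n) (z 1))
       | k n. k \<ge> 1 \<and> 2*n + 2*k - 1 = p}
   \<union> {pprod (map (\<lambda>i. pcomm (y i) (z 1)) [1..<2*k]) \<odot> pprod (replicate (2*n) (z 1))
       | k n. k \<ge> 1 \<and> 2*n + 2*k - 1 = p}"

definition I :: "nat \<Rightarrow> 'k::ring_1 fpoly set" where
  "I p = T2_ideal (gens p)"

end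

theory Submission
  imports Defs
begin

(*
  A is spanned by the monomials e_S \<otimes> e_T, and e_S \<otimes> e_T \<cdot> e_S' \<otimes> e_T' equals
  (-1)^(|S||S'| + |T||T'|) e_S' \<otimes> e_T' \<cdot> e_S \<otimes> e_T (the sign rule).  Splitting every element by the
  parities (|S| mod 2, |T| mod 2) of its monomials, an element of degree 0 is y = u + v and an element
  of degree 1 is z = a + b with u, v, a, b of bidegree (0,0), (1,0), (0,1), (1,1).  The sign rule gives
  [y, z] = 2vb, [y, y'] = 2vv', z \<circ> z' = 2bb', where u is central and a is square-zero.  From these
  formulas the generators (1)-(7) vanish by direct computation, while in (8) and (9) a factor b^p
  appears; b is a sum of commuting square-zero monomials, so b^p is a multiple of p! = 0.
*)

text \<open>Both the product of the free
  algebra (h = append, s = 1) and the product of E \<otimes> E (h = union, s = Grassmann sign) are of this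
  form, so their additivity is proved once.\<close>
definition bilin_term :: "('a \<Rightarrow> 'a \<Rightarrow> 'a) \<Rightarrow> ('a \<Rightarrow> 'a \<Rightarrow> 'k::comm_ring_1) \<Rightarrow> ('a \<Rightarrow>\<^sub>0 'k) \<Rightarrow> ('a \<Rightarrow>\<^sub>0 'k) \<Rightarrow>
    'a \<Rightarrow> 'a \<Rightarrow> ('a \<Rightarrow>\<^sub>0 'k)" where
  "bilin_term h s f g u v = Poly_Mapping.single (h u v) (Poly_Mapping.lookup f u * Poly_Mapping.lookup g v * s u v)"

definition bilin :: "('a \<Rightarrow> 'a \<Rightarrow> 'a) \<Rightarrow> ('a \<Rightarrow> 'a \<Rightarrow> 'k::comm_ring_1) \<Rightarrow> ('a \<Rightarrow>\<^sub>0 'k) \<Rightarrow> ('a \<Rightarrow>\<^sub>0 'k) \<Rightarrow> ('a \<Rightarrow>\<^sub>0 'k)" where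
  "bilin h s f g = (\<Sum>u\<in>Poly_Mapping.keys f. \<Sum>v\<in>Poly_Mapping.keys g. bilin_term h s f g u v)"

lemma bilin_superset:
  assumes "finite K" "finite L" "Poly_Mapping.keys f \<subseteq> K" "Poly_Mapping.keys g \<subseteq> L"
  shows "bilin h s f g = (\<Sum>u\<in>K. \<Sum>v\<in>L. bilin_term h s f g u v)"
proof -
  have zero: "bilin_term h s f g u v = 0" if "u \<notin> Poly_Mapping.keys f \<or> v \<notin> Poly_Mapping.keys g" for u v
    using that by (auto simp: bilin_term_def not_in_keys_iff_lookup_eq_zero)
  have inner: "(\<Sum>v\<in>Poly_Mapping.keys g. bilin_term h s f g u v) = (\<Sum>v\<in>L. bilin_term h s f g u v)" for u
    by (rule sum.mono_neutral_left) (use assms zero in auto)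
  have "bilin h s f g = (\<Sum>u\<in>Poly_Mapping.keys f. \<Sum>v\<in>L. bilin_term h s f g u v)"
    unfolding bilin_def inner ..
  also have "\<dots> = (\<Sum>u\<in>K. \<Sum>v\<in>L. bilin_term h s f g u v)"
    by (rule sum.mono_neutral_left) (use assms zero in auto)
  finally show ?thesis .
qed

lemma bilin_add_left: "bilin h s (f1 + f2) g = bilin h s f1 g + bilin h s f2 g"
proof -
  let ?K = "Poly_Mapping.keys f1 \<union> Poly_Mapping.keys f2" and ?L = "Poly_Mapping.keys g"
  have "bilin h s (f1 + f2) g = (\<Sum>u\<in>?K. \<Sum>v\<in>?L. bilin_term h s (f1 + f2) g u v)"
    by (rule bilin_superset) (use keys_add[of f1 f2] in auto)
  also have "\<dots> = (\<Sum>u\<in>?K. \<Sum>v\<in>?L. bilin_term h s f1 g u v) + (\<Sum>u\<in>?K. \<Sum>v\<in>?L. bilin_term h s f2 g u v)"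
    by (simp add: bilin_term_def lookup_add distrib_right single_add sum.distrib)
  also have "\<dots> = bilin h s f1 g + bilin h s f2 g"
    by (simp add: bilin_superset[of ?K ?L f1 g] bilin_superset[of ?K ?L f2 g])
  finally show ?thesis .
qed

lemma bilin_add_right: "bilin h s f (g1 + g2) = bilin h s f g1 + bilin h s f g2"
proof -
  let ?K = "Poly_Mapping.keys f" and ?L = "Poly_Mapping.keys g1 \<union> Poly_Mapping.keys g2"
  have "bilin h s f (g1 + g2) = (\<Sum>u\<in>?K. \<Sum>v\<in>?L. bilin_term h s f (g1 + g2) u v)"
    by (rule bilin_superset) (use keys_add[of g1 g2] in auto)
  also have "\<dots> = (\<Sum>u\<in>?K. \<Sum>v\<in>?L. bilin_term h s f g1 u v) + (\<Sum>u\<in>?K. \<Sum>v\<in>?L. bilin_term h s f g2 u v)"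
    by (simp add: bilin_term_def lookup_add distrib_left distrib_right single_add sum.distrib)
  also have "\<dots> = bilin h s f g1 + bilin h s f g2"
    by (simp add: bilin_superset[of ?K ?L f g1] bilin_superset[of ?K ?L f g2])
  finally show ?thesis .
qed

lemma bilin_zero_left[simp]: "bilin h s 0 g = 0" by (simp add: bilin_def)
lemma bilin_zero_right[simp]: "bilin h s f 0 = 0" by (simp add: bilin_def)

lemma bilin_single:
  "bilin h s (Poly_Mapping.single u c) (Poly_Mapping.single v d) = Poly_Mapping.single (h u v) (c * d * s u v)"
  by (cases "c = 0"; cases "d = 0") (simp_all add: bilin_def bilin_term_def)

lemma update_eq_add: "k \<notin> Poly_Mapping.keys f \<Longrightarrow> Poly_Mapping.update k c f = f + Poly_Mapping.single k c"
  by (rule poly_mapping_eqI) (auto simp: lookup_update lookup_add lookup_single in_keys_iff when_def)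

lemma pm_induct[case_names zero add]:
  assumes "P 0" "\<And>f k c. P f \<Longrightarrow> k \<notin> Poly_Mapping.keys f \<Longrightarrow> c \<noteq> 0 \<Longrightarrow> P (f + Poly_Mapping.single k c)"
  shows "P f"
  by (induction f rule: Poly_Mapping.update_induct) (use assms in \<open>simp_all add: update_eq_add\<close>)

lemma keys_bilin:
  "Poly_Mapping.keys (bilin h s f g) \<subseteq> {h u v | u v. u \<in> Poly_Mapping.keys f \<and> v \<in> Poly_Mapping.keys g}"
proof
  fix x assume "x \<in> Poly_Mapping.keys (bilin h s f g)"
  then obtain u where u: "u \<in> Poly_Mapping.keys f"
      "x \<in> Poly_Mapping.keys (\<Sum>v\<in>Poly_Mapping.keys g. bilin_term h s f g u v)"
    unfolding bilin_def using keys_sum[of "\<lambda>u. \<Sum>v\<in>Poly_Mapping.keys g. bilin_term h s f g u v"] by blast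
  then obtain v where v: "v \<in> Poly_Mapping.keys g" "x \<in> Poly_Mapping.keys (bilin_term h s f g u v)"
    using keys_sum[of "bilin_term h s f g u"] by blast
  then have "x = h u v" by (simp add: bilin_term_def split: if_splits)
  with u v show "x \<in> {h u v | u v. u \<in> Poly_Mapping.keys f \<and> v \<in> Poly_Mapping.keys g}" by blast
qed

lemma pmul_bilin: "pmul f g = bilin (@) (\<lambda>_ _. 1) f g"
  unfolding pmul_def bilin_def bilin_term_def by simp

definition key_union :: "nat set \<times> nat set \<Rightarrow> nat set \<times> nat set \<Rightarrow> nat set \<times> nat set" where
  "key_union k l = (fst k \<union> fst l, snd k \<union> snd l)"
definition key_sign :: "nat set \<times> nat set \<Rightarrow> nat set \<times> nat set \<Rightarrow> 'k::comm_ring_1" where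
  "key_sign k l = esign (fst k) (fst l) * esign (snd k) (snd l)"

lemma amul_bilin: "amul a b = bilin key_union key_sign a b"
  unfolding amul_def bilin_def bilin_term_def
proof (rule sum.cong[OF refl])
  fix u :: "nat set \<times> nat set"
  show "(case u of (S, T) \<Rightarrow> \<Sum>(S', T')\<in>Poly_Mapping.keys b. Poly_Mapping.single (S \<union> S', T \<union> T')
          (Poly_Mapping.lookup a (S, T) * Poly_Mapping.lookup b (S', T') * esign S S' * esign T T')) =
    (\<Sum>v\<in>Poly_Mapping.keys b. Poly_Mapping.single (key_union u v) (Poly_Mapping.lookup a u * Poly_Mapping.lookup b v * key_sign u v))"
    by (cases u) (auto simp: key_union_def key_sign_def mult.assoc split: prod.splits intro!: sum.cong)
qed

section \<open>The sign of the Grassmann product\<close>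

text \<open>Associativity of the product of E reduces to additivity of this count, and the commutation
  rule e_S e_T = (-1)^(|S||T|) e_T e_S to the fact that the inversions of (S,T) and (T,S)
  together are all of S \<times> T.\<close>
definition inversions :: "nat set \<Rightarrow> nat set \<Rightarrow> (nat \<times> nat) set" where
  "inversions A B = {(s, t). s \<in> A \<and> t \<in> B \<and> t < s}"

lemma esign_inversions: "esign A B = (if A \<inter> B = {} then (-1) ^ card (inversions A B) else 0)"
  by (simp add: esign_def inversions_def)

lemma finite_inversions[simp]: "finite A \<Longrightarrow> finite B \<Longrightarrow> finite (inversions A B)"
  by (rule finite_subset[of _ "A \<times> B"]) (auto simp: inversions_def)

lemma card_inversions_Un_left: "A \<inter> B = {} \<Longrightarrow> finite A \<Longrightarrow> finite B \<Longrightarrow> finite C \<Longrightarrow>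
   card (inversions (A \<union> B) C) = card (inversions A C) + card (inversions B C)"
proof -
  assume a: "A \<inter> B = {}" "finite A" "finite B" "finite C"
  have "inversions (A \<union> B) C = inversions A C \<union> inversions B C" by (auto simp: inversions_def)
  moreover have "inversions A C \<inter> inversions B C = {}" using a(1) by (auto simp: inversions_def)
  ultimately show ?thesis using a by (simp add: card_Un_disjoint)
qed

lemma card_inversions_Un_right: "B \<inter> C = {} \<Longrightarrow> finite A \<Longrightarrow> finite B \<Longrightarrow> finite C \<Longrightarrow>
   card (inversions A (B \<union> C)) = card (inversions A B) + card (inversions A C)"
proof -
  assume a: "B \<inter> C = {}" "finite A" "finite B" "finite C"
  have "inversions A (B \<union> C) = inversions A B \<union> inversions A C" by (auto simp: inversions_def)
  moreover have "inversions A B \<inter> inversions A C = {}" using a(1) by (auto simp: inversions_def)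
  ultimately show ?thesis using a by (simp add: card_Un_disjoint)
qed

lemma esign_assoc:
  assumes "finite A" "finite B" "finite C"
  shows "(esign A B * esign (A \<union> B) C :: 'k::ring_1) = esign B C * esign A (B \<union> C)"
proof (cases "A \<inter> B = {} \<and> A \<inter> C = {} \<and> B \<inter> C = {}")
  case True
  then have d: "(A \<union> B) \<inter> C = {}" "A \<inter> (B \<union> C) = {}" by auto
  show ?thesis using True d assms
    by (simp add: esign_inversions card_inversions_Un_left card_inversions_Un_right power_add[symmetric] ac_simps)
next
  case False
  then show ?thesis by (auto simp: esign_inversions)
qed

lemma card_inversions_swap:
  assumes a: "A \<inter> B = {}" "finite A" "finite B"
  shows "card (inversions A B) + card (inversions B A) = card A * card B"
proof -
  have "A \<times> B = inversions A B \<union> (\<lambda>(t, s). (s, t)) ` inversions B A"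
    using a(1) by (auto simp: inversions_def image_iff)
  moreover have "inversions A B \<inter> (\<lambda>(t, s). (s, t)) ` inversions B A = {}" by (auto simp: inversions_def)
  moreover have "card ((\<lambda>(t, s). (s, t)) ` inversions B A) = card (inversions B A)"
    by (rule card_image) (auto simp: inj_on_def)
  moreover have "finite ((\<lambda>(t, s). (s, t)) ` inversions B A)" using a by simp
  ultimately have "card (A \<times> B) = card (inversions A B) + card (inversions B A)"
    using a by (simp add: card_Un_disjoint)
  then show ?thesis by (simp add: card_cartesian_product)
qed

lemma esign_swap:
  assumes "finite A" "finite B"
  shows "(esign B A :: 'k::comm_ring_1) = (-1) ^ (card A * card B) * esign A B"
proof (cases "A \<inter> B = {}")
  case True
  then have "B \<inter> A = {}" by auto
  with True assms show ?thesis
    by (simp add: esign_inversions card_inversions_swap[symmetric] power_add ac_simps)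
next
  case False then show ?thesis by (auto simp: esign_inversions)
qed

lemma esign_empty_left[simp]: "esign {} A = 1" by (simp add: esign_def)
lemma esign_empty_right[simp]: "esign A {} = 1" by (simp add: esign_def)

section \<open>The algebra E \<otimes> E as a ring\<close>

text \<open>The product amul is only meaningful on elements whose basis monomials are indexed by finite
  sets; on these it is associative and unital.  They form the ring type EE below.\<close>
definition finite_keys :: "'k::zero tgr \<Rightarrow> bool" where
  "finite_keys a \<longleftrightarrow> (\<forall>k\<in>Poly_Mapping.keys a. finite (fst k) \<and> finite (snd k))"

lemma finite_keys_0[simp]: "finite_keys 0" by (simp add: finite_keys_def)
lemma finite_keys_add: "finite_keys (a::'k::comm_ring_1 tgr) \<Longrightarrow> finite_keys b \<Longrightarrow> finite_keys (a + b)"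
  unfolding finite_keys_def
proof
  fix k assume "\<forall>k\<in>Poly_Mapping.keys a. finite (fst k) \<and> finite (snd k)" "\<forall>k\<in>Poly_Mapping.keys b. finite (fst k) \<and> finite (snd k)"
    "k \<in> Poly_Mapping.keys (a + b)"
  moreover have "k \<in> Poly_Mapping.keys a \<union> Poly_Mapping.keys b" using keys_add \<open>k \<in> Poly_Mapping.keys (a + b)\<close> by (rule subsetD)
  ultimately show "finite (fst k) \<and> finite (snd k)" by (auto simp only: Un_iff)
qed
lemma finite_keys_uminus: "finite_keys (a::'k::comm_ring_1 tgr) \<Longrightarrow> finite_keys (- a)"
  unfolding finite_keys_def by simp
lemma finite_keys_diff: "finite_keys (a::'k::comm_ring_1 tgr) \<Longrightarrow> finite_keys b \<Longrightarrow> finite_keys (a - b)"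
  unfolding diff_conv_add_uminus by (intro finite_keys_add finite_keys_uminus)
lemma finite_keys_amul: "finite_keys (a::'k::comm_ring_1 tgr) \<Longrightarrow> finite_keys b \<Longrightarrow> finite_keys (amul a b)"
  unfolding finite_keys_def amul_bilin
proof
  fix k assume a: "\<forall>k\<in>Poly_Mapping.keys a. finite (fst k) \<and> finite (snd k)" "\<forall>k\<in>Poly_Mapping.keys b. finite (fst k) \<and> finite (snd k)"
    "k \<in> Poly_Mapping.keys (bilin key_union key_sign a b)"
  then obtain u v where "k = key_union u v" "u \<in> Poly_Mapping.keys a" "v \<in> Poly_Mapping.keys b"
    using subsetD[OF keys_bilin a(3)] by blast
  with a show "finite (fst k) \<and> finite (snd k)" by (simp add: key_union_def)
qed
lemma finite_keys_single: "finite S \<Longrightarrow> finite T \<Longrightarrow> finite_keys (Poly_Mapping.single (S, T) c)"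
  by (simp add: finite_keys_def)
lemma finite_keys_aconst[simp]: "finite_keys (aconst c)" by (simp add: aconst_def finite_keys_def)
lemma finite_keys_add_single: "k \<notin> Poly_Mapping.keys f \<Longrightarrow> c \<noteq> 0 \<Longrightarrow>
    finite_keys (f + Poly_Mapping.single k c) \<longleftrightarrow> finite_keys f \<and> finite (fst k) \<and> finite (snd k)"
proof -
  assume a: "k \<notin> Poly_Mapping.keys f" "c \<noteq> 0"
  have "Poly_Mapping.keys (f + Poly_Mapping.single k c) = insert k (Poly_Mapping.keys f)"
    using a by (auto simp: in_keys_iff lookup_add lookup_single when_def split: if_splits)
  then show ?thesis by (auto simp: finite_keys_def)
qed

lemma finite_keys_induct[consumes 1, case_names zero add]:
  assumes "finite_keys f" "P 0"
    "\<And>f k c. finite_keys f \<Longrightarrow> P f \<Longrightarrow> k \<notin> Poly_Mapping.keys f \<Longrightarrow> c \<noteq> 0 \<Longrightarrow> finite (fst k) \<Longrightarrow> finite (snd k) \<Longrightarrow> P (f + Poly_Mapping.single k c)"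
  shows "P f"
proof -
  have "finite_keys f \<longrightarrow> P f"
  proof (induction f rule: pm_induct)
    case zero then show ?case using assms(2) by simp
  next
    case (add f k c) then show ?case using assms(3) by (simp add: finite_keys_add_single)
  qed
  then show ?thesis using assms(1) by simp
qed

lemma amul_add_left: "amul (a + b) (c::'k::comm_ring_1 tgr) = amul a c + amul b c" by (simp add: amul_bilin bilin_add_left)
lemma amul_add_right: "amul a (b + c::'k::comm_ring_1 tgr) = amul a b + amul a c" by (simp add: amul_bilin bilin_add_right)
lemma amul_single: "amul (Poly_Mapping.single k (c::'k::comm_ring_1)) (Poly_Mapping.single l d) = Poly_Mapping.single (key_union k l) (c * d * key_sign k l)"
  by (simp add: amul_bilin bilin_single)
lemma amul_zero_left[simp]: "amul 0 (b::'k::comm_ring_1 tgr) = 0" by (simp add: amul_bilin)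
lemma amul_zero_right[simp]: "amul (a::'k::comm_ring_1 tgr) 0 = 0" by (simp add: amul_bilin)

lemma key_sign_assoc: "finite (fst k1) \<Longrightarrow> finite (snd k1) \<Longrightarrow> finite (fst k2) \<Longrightarrow> finite (snd k2) \<Longrightarrow> finite (fst k3) \<Longrightarrow> finite (snd k3) \<Longrightarrow>
  (key_sign k1 k2 * key_sign (key_union k1 k2) k3 :: 'k::comm_ring_1) = key_sign k2 k3 * key_sign k1 (key_union k2 k3)"
proof -
  assume f: "finite (fst k1)" "finite (snd k1)" "finite (fst k2)" "finite (snd k2)" "finite (fst k3)" "finite (snd k3)"
  have e1: "(esign (fst k1) (fst k2) * esign (fst k1 \<union> fst k2) (fst k3) :: 'k) = esign (fst k2) (fst k3) * esign (fst k1) (fst k2 \<union> fst k3)"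
    using f by (simp add: esign_assoc)
  have e2: "(esign (snd k1) (snd k2) * esign (snd k1 \<union> snd k2) (snd k3) :: 'k) = esign (snd k2) (snd k3) * esign (snd k1) (snd k2 \<union> snd k3)"
    using f by (simp add: esign_assoc)
  have "(key_sign k1 k2 * key_sign (key_union k1 k2) k3 :: 'k) = (esign (fst k1) (fst k2) * esign (fst k1 \<union> fst k2) (fst k3)) * (esign (snd k1) (snd k2) * esign (snd k1 \<union> snd k2) (snd k3))"
    by (simp add: key_sign_def key_union_def ac_simps)
  also have "\<dots> = (esign (fst k2) (fst k3) * esign (fst k1) (fst k2 \<union> fst k3)) * (esign (snd k2) (snd k3) * esign (snd k1) (snd k2 \<union> snd k3))"
    by (simp only: e1 e2)
  also have "\<dots> = key_sign k2 k3 * key_sign k1 (key_union k2 k3)"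
    by (simp add: key_sign_def key_union_def ac_simps)
  finally show ?thesis .
qed

lemma amul_assoc_single3:
  assumes "finite (fst k1)" "finite (snd k1)" "finite (fst k2)" "finite (snd k2)" "finite (fst k3)" "finite (snd k3)"
  shows "amul (amul (Poly_Mapping.single k1 x1) (Poly_Mapping.single k2 x2)) (Poly_Mapping.single k3 (x3::'k::comm_ring_1)) =
         amul (Poly_Mapping.single k1 x1) (amul (Poly_Mapping.single k2 x2) (Poly_Mapping.single k3 x3))"
proof -
  have h: "key_union (key_union k1 k2) k3 = key_union k1 (key_union k2 k3)" by (simp add: key_union_def Un_assoc)
  have s: "x1 * x2 * key_sign k1 k2 * x3 * key_sign (key_union k1 k2) k3 = x1 * (x2 * x3 * key_sign k2 k3) * (key_sign k1 (key_union k2 k3) :: 'k)"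
  proof -
    have "x1 * x2 * key_sign k1 k2 * x3 * key_sign (key_union k1 k2) k3 = x1 * x2 * x3 * (key_sign k1 k2 * key_sign (key_union k1 k2) k3 :: 'k)"
      by (simp add: ac_simps)
    also have "\<dots> = x1 * x2 * x3 * (key_sign k2 k3 * key_sign k1 (key_union k2 k3))" using key_sign_assoc assms by metis
    finally show ?thesis by (simp add: ac_simps)
  qed
  show ?thesis by (simp add: amul_single h s)
qed

lemma amul_assoc_single2:
  assumes "finite_keys c" "finite (fst k1)" "finite (snd k1)" "finite (fst k2)" "finite (snd k2)"
  shows "amul (amul (Poly_Mapping.single k1 x1) (Poly_Mapping.single k2 x2)) c =
         amul (Poly_Mapping.single k1 x1) (amul (Poly_Mapping.single k2 (x2::'k::comm_ring_1)) c)"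
  using assms(1)
proof (induction c rule: finite_keys_induct)
  case zero then show ?case by simp
next
  case (add f k c) then show ?case using assms by (simp add: amul_add_right amul_assoc_single3)
qed

lemma amul_assoc_single1:
  assumes "finite_keys b" "finite_keys c" "finite (fst k1)" "finite (snd k1)"
  shows "amul (amul (Poly_Mapping.single k1 x1) b) c = amul (Poly_Mapping.single k1 (x1::'k::comm_ring_1)) (amul b c)"
  using assms(1)
proof (induction b rule: finite_keys_induct)
  case zero then show ?case by simp
next
  case (add f k d) then show ?case using assms by (simp add: amul_add_right amul_add_left amul_assoc_single2)
qed

lemma amul_assoc:
  assumes "finite_keys a" "finite_keys b" "finite_keys (c :: 'k::comm_ring_1 tgr)"
  shows "amul (amul a b) c = amul a (amul b c)"
  using assms(1)
proof (induction a rule: finite_keys_induct)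
  case zero then show ?case by simp
next
  case (add f k d) then show ?case using assms by (simp add: amul_add_left amul_assoc_single1)
qed

lemma amul_one_left: "finite_keys a \<Longrightarrow> amul (aconst 1) a = (a :: 'k::comm_ring_1 tgr)"
proof (induction a rule: finite_keys_induct)
  case zero then show ?case by simp
next
  case (add f k c) then show ?case by (simp add: aconst_def amul_add_right amul_single key_union_def key_sign_def)
qed

lemma amul_one_right: "finite_keys a \<Longrightarrow> amul a (aconst 1) = (a :: 'k::comm_ring_1 tgr)"
proof (induction a rule: finite_keys_induct)
  case zero then show ?case by simp
next
  case (add f k c) then show ?case by (simp add: aconst_def amul_add_left amul_single key_union_def key_sign_def)
qed

typedef (overloaded) ('k::comm_ring_1) EE = "{a :: 'k tgr. finite_keys a}"
  morphisms rep_EE abs_EE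
  by (rule exI[of _ 0]) simp

setup_lifting type_definition_EE

instantiation EE :: (comm_ring_1) ring_1
begin
lift_definition zero_EE :: "'a EE" is 0 by simp
lift_definition one_EE :: "'a EE" is "aconst 1" by simp
lift_definition plus_EE :: "'a EE \<Rightarrow> 'a EE \<Rightarrow> 'a EE" is "(+)" by (rule finite_keys_add)
lift_definition minus_EE :: "'a EE \<Rightarrow> 'a EE \<Rightarrow> 'a EE" is "(-)" by (rule finite_keys_diff)
lift_definition uminus_EE :: "'a EE \<Rightarrow> 'a EE" is uminus by (rule finite_keys_uminus)
lift_definition times_EE :: "'a EE \<Rightarrow> 'a EE \<Rightarrow> 'a EE" is amul by (rule finite_keys_amul)
instance
proof
  fix a b c :: "'a EE"
  show "a * b * c = a * (b * c)" by transfer (rule amul_assoc)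
  show "1 * a = a" by transfer (rule amul_one_left)
  show "a * 1 = a" by transfer (rule amul_one_right)
  show "(a + b) * c = a * c + b * c" by transfer (rule amul_add_left)
  show "a * (b + c) = a * b + a * c" by transfer (rule amul_add_right)
  show "a + b + c = a + (b + c)" by transfer (rule add.assoc)
  show "a + b = b + a" by transfer (rule add.commute)
  show "0 + a = a" by transfer simp
  show "- a + a = 0" by transfer simp
  show "a - b = a + - b" by transfer simp
  show "(0::'a EE) \<noteq> 1" by transfer (metis aconst_def lookup_single_eq lookup_zero zero_neq_one)
qed
end

lift_definition scal :: "'k::comm_ring_1 \<Rightarrow> 'k EE" is aconst by simp

lift_definition emonom :: "nat set \<Rightarrow> nat set \<Rightarrow> 'k::comm_ring_1 \<Rightarrow> 'k EE" is
  "\<lambda>S T c. if finite S \<and> finite T then Poly_Mapping.single (S, T) c else 0"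
  by (auto simp: finite_keys_def)

lemma rep_emonom: "finite S \<Longrightarrow> finite T \<Longrightarrow> rep_EE (emonom S T c) = Poly_Mapping.single (S, T) c"
  by (simp add: emonom.rep_eq)

lemma scal_emonom: "scal c = emonom {} {} c"
  by transfer (simp add: aconst_def)

lemma scal_add: "scal (c + d) = scal c + scal d"
  by transfer (simp add: aconst_def single_add)
lemma scal_0[simp]: "scal 0 = 0"
  by transfer (simp add: aconst_def)
lemma scal_1[simp]: "scal 1 = 1"
  by transfer simp
lemma scal_mult: "scal (c * d) = scal c * scal d"
  by transfer (simp add: aconst_def amul_single key_union_def key_sign_def)

lemma aconst_comm: "finite_keys a \<Longrightarrow> amul (aconst c) a = amul a (aconst (c::'k::comm_ring_1))"
proof (induction a rule: finite_keys_induct)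
  case zero then show ?case by simp
next
  case (add f k d) then show ?case
    by (simp add: aconst_def amul_add_left amul_add_right amul_single key_union_def key_sign_def mult.commute)
qed

lemma scal_comm: "scal c * a = a * scal c"
  by transfer (rule aconst_comm)

lemma of_nat_scal: "(of_nat n :: 'k::comm_ring_1 EE) = scal (of_nat n)"
  by (induction n) (simp_all add: scal_add)

lemma emonom_mult: "finite S \<Longrightarrow> finite T \<Longrightarrow> finite S' \<Longrightarrow> finite T' \<Longrightarrow>
  emonom S T c * emonom S' T' d = emonom (S \<union> S') (T \<union> T') (c * d * (esign S S' * esign T T'))"
  by transfer (simp add: amul_single key_union_def key_sign_def)

lemma emonom_uminus: "emonom S T (- c) = - emonom S T c"
  by transfer (simp add: single_uminus)

lemma emonom_0[simp]: "emonom S T 0 = 0"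
  by transfer simp

lemma keys_add_emonom:
  assumes "finite S" "finite T" "(S, T) \<notin> Poly_Mapping.keys (rep_EE a)" "c \<noteq> 0"
  shows "Poly_Mapping.keys (rep_EE (a + emonom S T c)) = insert (S, T) (Poly_Mapping.keys (rep_EE a))"
  using assms by (auto simp: plus_EE.rep_eq rep_emonom in_keys_iff lookup_add lookup_single when_def split: if_splits)

lemma EE_induct[case_names zero add]:
  assumes "P 0"
    "\<And>a S T c. P a \<Longrightarrow> finite S \<Longrightarrow> finite T \<Longrightarrow> (S, T) \<notin> Poly_Mapping.keys (rep_EE a) \<Longrightarrow> c \<noteq> 0 \<Longrightarrow> P (a + emonom S T c)"
  shows "P a"
proof -
  have "P (abs_EE f)" if f: "finite_keys f" for f
    using f
  proof (induction f rule: finite_keys_induct)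
    case zero
    then show ?case using assms(1) by (simp add: zero_EE_def)
  next
    case (add f k c)
    obtain S T where k: "k = (S, T)" by (cases k)
    have fS: "finite S" "finite T" using add k by auto
    have rf: "rep_EE (abs_EE f) = f" using add by (simp add: abs_EE_inverse)
    have "abs_EE (f + Poly_Mapping.single k c) = abs_EE f + emonom S T c"
      by (rule rep_EE_inject[THEN iffD1]) (use add k fS rf in \<open>simp add: abs_EE_inverse finite_keys_add finite_keys_single plus_EE.rep_eq rep_emonom\<close>)
    moreover have "P (abs_EE f + emonom S T c)"
      by (rule assms(2)) (use add k fS rf in auto)
    ultimately show ?case by simp
  qed
  from this[of "rep_EE a"] show ?thesis using rep_EE[of a] by (simp add: rep_EE_inverse)
qed

section \<open>Bidegree, the sign rule and the Z_2-grading\<close>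

definition supp_in :: "(nat set \<times> nat set \<Rightarrow> bool) \<Rightarrow> 'k::comm_ring_1 EE set" where
  "supp_in P = {a. \<forall>k\<in>Poly_Mapping.keys (rep_EE a). P k}"

lemma supp_in_0[simp]: "0 \<in> supp_in P" by (simp add: supp_in_def zero_EE.rep_eq)
lemma supp_in_add: "a \<in> supp_in P \<Longrightarrow> b \<in> supp_in P \<Longrightarrow> a + b \<in> supp_in P"
  unfolding supp_in_def plus_EE.rep_eq mem_Collect_eq
proof
  fix k assume a: "\<forall>k\<in>Poly_Mapping.keys (rep_EE a). P k" "\<forall>k\<in>Poly_Mapping.keys (rep_EE b). P k"
    "k \<in> Poly_Mapping.keys (rep_EE a + rep_EE b)"
  have "k \<in> Poly_Mapping.keys (rep_EE a) \<union> Poly_Mapping.keys (rep_EE b)" by (rule subsetD[OF keys_add a(3)])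
  with a show "P k" by blast
qed
lemma supp_in_uminus: "a \<in> supp_in P \<Longrightarrow> - a \<in> supp_in P"
  by (simp add: supp_in_def uminus_EE.rep_eq)
lemma supp_in_emonom: "finite S \<Longrightarrow> finite T \<Longrightarrow> P (S, T) \<Longrightarrow> emonom S T c \<in> supp_in P"
  by (simp add: supp_in_def rep_emonom)
lemma supp_in_add_emonom:
  assumes "finite S" "finite T" "(S, T) \<notin> Poly_Mapping.keys (rep_EE a)" "c \<noteq> 0"
  shows "a + emonom S T c \<in> supp_in P \<longleftrightarrow> a \<in> supp_in P \<and> P (S, T)"
  using keys_add_emonom[OF assms] by (auto simp: supp_in_def)

lemma supp_in_induct[consumes 1, case_names zero add]:
  assumes "a \<in> supp_in P" "Q 0"
    "\<And>a S T c. a \<in> supp_in P \<Longrightarrow> Q a \<Longrightarrow> finite S \<Longrightarrow> finite T \<Longrightarrow> P (S, T) \<Longrightarrow> Q (a + emonom S T c)"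
  shows "Q a"
proof -
  have "a \<in> supp_in P \<longrightarrow> Q a"
  proof (induction a rule: EE_induct)
    case zero then show ?case using assms(2) by simp
  next
    case (add a S T c) then show ?case using assms(3) by (simp add: supp_in_add_emonom)
  qed
  then show ?thesis using assms(1) by simp
qed

definition bideg :: "bool \<Rightarrow> bool \<Rightarrow> 'k::comm_ring_1 EE set" where
  "bideg p q = supp_in (\<lambda>k. odd (card (fst k)) = p \<and> odd (card (snd k)) = q)"

definition deg :: "bool \<Rightarrow> 'k::comm_ring_1 EE set" where
  "deg q = supp_in (\<lambda>k. odd (card (snd k)) = q)"

lemma bideg_deg: "a \<in> bideg p q \<Longrightarrow> a \<in> deg q"
  unfolding bideg_def deg_def supp_in_def by auto

text \<open>The sign rule: elements of bidegrees (p,q) and (p',q') commute up to the sign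
  (-1)^(pp' + qq'), i.e. they commute iff pp' = qq'.\<close>
lemma neg1_pow_mult: "((-1::'k::comm_ring_1) ^ (m * n)) = (if odd m \<and> odd n then -1 else 1)"
  by (simp add: minus_one_power_iff)

definition sign_rule :: "bool \<Rightarrow> bool \<Rightarrow> bool \<Rightarrow> bool \<Rightarrow> 'k::comm_ring_1 EE" where
  "sign_rule p q p' q' = (if (p \<and> p') = (q \<and> q') then 1 else -1)"

lemma emonom_comm:
  assumes "finite S" "finite T" "finite S'" "finite T'"
  shows "emonom S T c * emonom S' T' d = sign_rule (odd (card S)) (odd (card T)) (odd (card S')) (odd (card T')) * (emonom S' T' d * emonom S T c)"
proof -
  define P where "P = (odd (card S) \<and> odd (card S'))"
  define Q where "Q = (odd (card T) \<and> odd (card T'))"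
  define k where "k = c * d * (esign S S' * esign T T' :: 'a)"
  have e1: "(esign S' S :: 'a) = (if P then -1 else 1) * esign S S'"
    using esign_swap[OF assms(1,3)] unfolding P_def by (simp add: neg1_pow_mult)
  have e2: "(esign T' T :: 'a) = (if Q then -1 else 1) * esign T T'"
    using esign_swap[OF assms(2,4)] unfolding Q_def by (simp add: neg1_pow_mult)
  have co: "d * c * (esign S' S * esign T' T) = (if P = Q then k else - k)"
    unfolding e1 e2 k_def by (cases P; cases Q) (simp_all add: algebra_simps)
  have l: "emonom S T c * emonom S' T' d = emonom (S \<union> S') (T \<union> T') k"
    using assms by (simp add: emonom_mult k_def)
  have r: "emonom S' T' d * emonom S T c = emonom (S \<union> S') (T \<union> T') (if P = Q then k else - k)"
    using assms by (simp add: emonom_mult co Un_commute)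
  show ?thesis unfolding l r sign_rule_def P_def[symmetric] Q_def[symmetric]
    by (simp add: emonom_uminus)
qed

lemma bideg_emonom: "finite S \<Longrightarrow> finite T \<Longrightarrow> emonom S T c \<in> bideg (odd (card S)) (odd (card T))"
  unfolding bideg_def by (rule supp_in_emonom) auto

lemma emonom_sign_rule:
  assumes "b \<in> bideg p' q'" "finite S" "finite T"
  shows "emonom S T c * b = sign_rule (odd (card S)) (odd (card T)) p' q' * (b * emonom S T c)"
  using assms(1)[unfolded bideg_def]
proof (induction b rule: supp_in_induct)
  case zero then show ?case by simp
next
  case (add a S' T' d)
  have 1: "emonom S T c * a = sign_rule (odd (card S)) (odd (card T)) p' q' * (a * emonom S T c)" by (rule add.IH)
  have 2: "emonom S T c * emonom S' T' d = sign_rule (odd (card S)) (odd (card T)) p' q' * (emonom S' T' d * emonom S T c)"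
    using emonom_comm[OF assms(2,3) add.hyps(2,3), of c d] add.hyps(4) by simp
  show ?case by (simp only: distrib_left distrib_right 1 2)
qed

lemma bideg_sign_rule:
  assumes "a \<in> bideg p q" "b \<in> bideg p' q'"
  shows "a * b = sign_rule p q p' q' * (b * a)"
  using assms(1)[unfolded bideg_def]
proof (induction a rule: supp_in_induct)
  case zero then show ?case by simp
next
  case (add a S T c)
  have 1: "a * b = sign_rule p q p' q' * (b * a)" by (rule add.IH)
  have 2: "emonom S T c * b = sign_rule p q p' q' * (b * emonom S T c)"
    using emonom_sign_rule[OF assms(2) add.hyps(2,3), of c] add.hyps(4) by simp
  show ?case by (simp only: distrib_left distrib_right 1 2)
qed

lemma bideg_commute: "a \<in> bideg p q \<Longrightarrow> b \<in> bideg p' q' \<Longrightarrow> (p \<and> p') = (q \<and> q') \<Longrightarrow> a * b = b * a"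
proof -
  assume h: "a \<in> bideg p q" "b \<in> bideg p' q'" "(p \<and> p') = (q \<and> q')"
  then have "sign_rule p q p' q' = (1::'a EE)" unfolding sign_rule_def by (simp only: if_P)
  then show ?thesis using bideg_sign_rule[OF h(1,2)] by simp
qed
lemma bideg_anticommute: "a \<in> bideg p q \<Longrightarrow> b \<in> bideg p' q' \<Longrightarrow> (p \<and> p') \<noteq> (q \<and> q') \<Longrightarrow> a * b = - (b * a)"
proof -
  assume h: "a \<in> bideg p q" "b \<in> bideg p' q'" "(p \<and> p') \<noteq> (q \<and> q')"
  then have "sign_rule p q p' q' = (-1::'a EE)" unfolding sign_rule_def by (simp only: if_not_P if_False)
  then show ?thesis using bideg_sign_rule[OF h(1,2)] by simp
qed

lemma bideg_0[simp]: "0 \<in> bideg p q" by (simp add: bideg_def)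
lemma bideg_add: "a \<in> bideg p q \<Longrightarrow> b \<in> bideg p q \<Longrightarrow> a + b \<in> bideg p q" by (simp add: bideg_def supp_in_add)
lemma bideg_uminus: "a \<in> bideg p q \<Longrightarrow> - a \<in> bideg p q" by (simp add: bideg_def supp_in_uminus)
lemma bideg_emonom_mult:
  assumes "finite S" "finite T" "finite S'" "finite T'"
  shows "emonom S T c * emonom S' T' d \<in> bideg (odd (card S) \<noteq> odd (card S')) (odd (card T) \<noteq> odd (card T'))"
proof (cases "S \<inter> S' = {} \<and> T \<inter> T' = {}")
  case True
  then have c1: "card (S \<union> S') = card S + card S'" and c2: "card (T \<union> T') = card T + card T'"
    using assms by (simp_all add: card_Un_disjoint)
  have "emonom (S \<union> S') (T \<union> T') (c * d * (esign S S' * esign T T')) \<in> bideg (odd (card (S \<union> S'))) (odd (card (T \<union> T')))"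
    using assms by (intro bideg_emonom) auto
  then show ?thesis unfolding emonom_mult[OF assms] c1 c2 by simp
next
  case False
  then have "(esign S S' * esign T T' :: 'a) = 0" by (auto simp: esign_def)
  then show ?thesis unfolding emonom_mult[OF assms] by simp
qed

lemma bideg_emonom_mult_left:
  assumes "b \<in> bideg p' q'" "finite S" "finite T"
  shows "emonom S T c * b \<in> bideg (odd (card S) \<noteq> p') (odd (card T) \<noteq> q')"
  using assms(1)[unfolded bideg_def]
proof (induction b rule: supp_in_induct)
  case zero then show ?case by simp
next
  case (add a S' T' d)
  have "emonom S T c * emonom S' T' d \<in> bideg (odd (card S) \<noteq> p') (odd (card T) \<noteq> q')"
    using bideg_emonom_mult[OF assms(2,3) add.hyps(2,3), of c d] add.hyps(4) by simp
  then show ?case unfolding distrib_left by (rule bideg_add[OF add.IH])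
qed

lemma bideg_mult:
  assumes "a \<in> bideg p q" "b \<in> bideg p' q'"
  shows "a * b \<in> bideg (p \<noteq> p') (q \<noteq> q')"
  using assms(1)[unfolded bideg_def]
proof (induction a rule: supp_in_induct)
  case zero then show ?case by simp
next
  case (add a S T c)
  have e: "odd (card S) = p" "odd (card T) = q" using add.hyps(4) by auto
  have "emonom S T c * b \<in> bideg (odd (card S) \<noteq> p') (odd (card T) \<noteq> q')"
    by (rule bideg_emonom_mult_left[OF assms(2) add.hyps(2,3)])
  then have "emonom S T c * b \<in> bideg (p \<noteq> p') (q \<noteq> q')" unfolding e .
  then show ?case unfolding distrib_right by (rule bideg_add[OF add.IH])
qed

lemma scal_bideg: "scal c \<in> bideg False False"
  using bideg_emonom[of "{}" "{}" c] by (simp add: scal_emonom)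

lemma deg_decomp:
  assumes "a \<in> deg q"
  shows "\<exists>u v. a = u + v \<and> u \<in> bideg False q \<and> v \<in> bideg True q"
  using assms[unfolded deg_def]
proof (induction a rule: supp_in_induct)
  case zero
  have "(0::'a EE) = 0 + 0 \<and> 0 \<in> bideg False q \<and> (0::'a EE) \<in> bideg True q" by simp
  then show ?case by blast
next
  case (add a S T c)
  then obtain u v where uv: "a = u + v" "u \<in> bideg False q" "v \<in> bideg True q" by blast
  have m: "emonom S T c \<in> bideg (odd (card S)) q" using bideg_emonom[of S T c] add by simp
  show ?case
  proof (cases "odd (card S)")
    case True
    then have "a + emonom S T c = u + (v + emonom S T c) \<and> u \<in> bideg False q \<and> v + emonom S T c \<in> bideg True q"
      using uv m by (simp add: bideg_add add.assoc)
    then show ?thesis by blast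
  next
    case False
    then have "a + emonom S T c = (u + emonom S T c) + v \<and> u + emonom S T c \<in> bideg False q \<and> v \<in> bideg True q"
      using uv m by (simp add: bideg_add ac_simps)
    then show ?thesis by blast
  qed
qed

lemma deg_0[simp]: "0 \<in> deg q" by (simp add: deg_def)
lemma deg_add: "a \<in> deg q \<Longrightarrow> b \<in> deg q \<Longrightarrow> a + b \<in> deg q" by (simp add: deg_def supp_in_add)

lemma deg_mult:
  assumes "a \<in> deg q" "b \<in> deg q'"
  shows "a * b \<in> deg (q \<noteq> q')"
proof -
  obtain u v where a: "a = u + v" "u \<in> bideg False q" "v \<in> bideg True q" using deg_decomp[OF assms(1)] by blast
  obtain u' v' where b: "b = u' + v'" "u' \<in> bideg False q'" "v' \<in> bideg True q'" using deg_decomp[OF assms(2)] by blast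
  have e: "a * b = u * u' + u * v' + (v * u' + v * v')" by (simp add: a b algebra_simps)
  have 1: "u * u' \<in> deg (q \<noteq> q')" by (rule bideg_deg[OF bideg_mult[OF a(2) b(2)]])
  have 2: "u * v' \<in> deg (q \<noteq> q')" by (rule bideg_deg[OF bideg_mult[OF a(2) b(3)]])
  have 3: "v * u' \<in> deg (q \<noteq> q')" by (rule bideg_deg[OF bideg_mult[OF a(3) b(2)]])
  have 4: "v * v' \<in> deg (q \<noteq> q')" by (rule bideg_deg[OF bideg_mult[OF a(3) b(3)]])
  show ?thesis unfolding e by (intro deg_add 1 2 3 4)
qed

lemma scal_mult_deg: "b \<in> deg q \<Longrightarrow> scal c * b \<in> deg q"
  using deg_mult[OF bideg_deg[OF scal_bideg], of b q c] by simp

section \<open>Evaluation of noncommutative polynomials in EE\<close>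

definition evalE :: "(var \<Rightarrow> 'k::comm_ring_1 EE) \<Rightarrow> 'k fpoly \<Rightarrow> 'k EE" where
  "evalE \<psi> f = (\<Sum>w\<in>Poly_Mapping.keys f. scal (Poly_Mapping.lookup f w) * prod_list (map \<psi> w))"

lemma evalE_superset:
  assumes "finite K" "Poly_Mapping.keys f \<subseteq> K"
  shows "evalE \<psi> f = (\<Sum>w\<in>K. scal (Poly_Mapping.lookup f w) * prod_list (map \<psi> w))"
  unfolding evalE_def
proof (rule sum.mono_neutral_left)
  show "\<forall>i\<in>K - Poly_Mapping.keys f. scal (Poly_Mapping.lookup f i) * prod_list (map \<psi> i) = 0"
    by (simp add: not_in_keys_iff_lookup_eq_zero)
qed (use assms in auto)

lemma evalE_add: "evalE \<psi> (f + g) = evalE \<psi> f + evalE \<psi> g"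
proof -
  let ?K = "Poly_Mapping.keys f \<union> Poly_Mapping.keys g"
  have e1: "evalE \<psi> (f + g) = (\<Sum>w\<in>?K. scal (Poly_Mapping.lookup (f + g) w) * prod_list (map \<psi> w))"
    by (rule evalE_superset) (use keys_add[of f g] in auto)
  have e2: "evalE \<psi> f = (\<Sum>w\<in>?K. scal (Poly_Mapping.lookup f w) * prod_list (map \<psi> w))"
    by (rule evalE_superset) auto
  have e3: "evalE \<psi> g = (\<Sum>w\<in>?K. scal (Poly_Mapping.lookup g w) * prod_list (map \<psi> w))"
    by (rule evalE_superset) auto
  show ?thesis unfolding e1 e2 e3
    by (simp only: lookup_add scal_add distrib_right sum.distrib)
qed

lemma evalE_zero[simp]: "evalE \<psi> 0 = 0" by (simp add: evalE_def)

lemma evalE_uminus: "evalE \<psi> (- f) = - evalE \<psi> f"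
proof -
  have "evalE \<psi> (- f) + evalE \<psi> f = 0"
    by (simp only: evalE_add[symmetric] add.left_inverse evalE_zero)
  then show ?thesis by (simp add: eq_neg_iff_add_eq_0)
qed

lemma evalE_diff: "evalE \<psi> (f - g) = evalE \<psi> f - evalE \<psi> g"
  by (simp only: diff_conv_add_uminus evalE_add evalE_uminus)

lemma evalE_single: "evalE \<psi> (Poly_Mapping.single w c) = scal c * prod_list (map \<psi> w)"
  by (cases "c = 0") (simp_all add: evalE_def)

lemma evalE_sum: "evalE \<psi> (sum F J) = (\<Sum>i\<in>J. evalE \<psi> (F i))"
  by (induction J rule: infinite_finite_induct) (simp_all add: evalE_add)

lemma pmul_add_left: "(f1 + f2) \<odot> g = f1 \<odot> g + f2 \<odot> (g :: 'k::comm_ring_1 fpoly)"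
  by (simp add: pmul_bilin bilin_add_left)
lemma pmul_add_right: "f \<odot> (g1 + g2) = f \<odot> g1 + f \<odot> (g2 :: 'k::comm_ring_1 fpoly)"
  by (simp add: pmul_bilin bilin_add_right)
lemma pmul_zero_left[simp]: "0 \<odot> (g :: 'k::comm_ring_1 fpoly) = 0" by (simp add: pmul_bilin)
lemma pmul_zero_right[simp]: "(f :: 'k::comm_ring_1 fpoly) \<odot> 0 = 0" by (simp add: pmul_bilin)
lemma pmul_single: "Poly_Mapping.single u c \<odot> Poly_Mapping.single v d = Poly_Mapping.single (u @ v) (c * (d :: 'k::comm_ring_1))"
  by (simp add: pmul_bilin bilin_single)

lemma scal_prod_comm: "scal c * x1 * (scal d * x2) = scal (c * d) * (x1 * x2)"
  by (simp add: scal_mult mult.assoc) (metis mult.assoc scal_comm)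

lemma evalE_mul_single:
  "evalE \<psi> (Poly_Mapping.single u c \<odot> g) = evalE \<psi> (Poly_Mapping.single u c) * evalE \<psi> g"
proof (induction g rule: pm_induct)
  case zero then show ?case by simp
next
  case (add f k d)
  then show ?case
    by (simp add: pmul_add_right evalE_add distrib_left pmul_single evalE_single scal_prod_comm)
qed

lemma evalE_mul: "evalE \<psi> (f \<odot> g) = evalE \<psi> f * evalE \<psi> g"
proof (induction f rule: pm_induct)
  case zero then show ?case by simp
next
  case (add f k d)
  then show ?case
    by (simp add: pmul_add_left evalE_add distrib_right evalE_mul_single)
qed

lemma evalE_pvar[simp]: "evalE \<psi> (pvar x) = \<psi> x"
  by (simp add: pvar_def evalE_single)
lemma evalE_pconst: "evalE \<psi> (pconst c) = scal c"
  by (simp add: pconst_def evalE_single)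
lemma evalE_pone[simp]: "evalE \<psi> pone = 1"
  by (simp add: pone_def evalE_pconst)
lemma evalE_pprod: "evalE \<psi> (pprod fs) = prod_list (map (evalE \<psi>) fs)"
  by (induction fs) (simp_all add: pprod_def evalE_mul)
lemma evalE_pcomm[simp]: "evalE \<psi> (pcomm a b) = evalE \<psi> a * evalE \<psi> b - evalE \<psi> b * evalE \<psi> a"
  by (simp add: pcomm_def evalE_diff evalE_mul)
lemma evalE_pcirc[simp]: "evalE \<psi> (pcirc a b) = evalE \<psi> a * evalE \<psi> b + evalE \<psi> b * evalE \<psi> a"
  by (simp add: pcirc_def evalE_add evalE_mul)
lemma evalE_pcomm3[simp]: "evalE \<psi> (pcomm3 a b c) = evalE \<psi> (pcomm (pcomm a b) c)"
  by (simp add: pcomm3_def)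

lemma evalE_psubst: "evalE \<psi> (psubst \<sigma> f) = evalE (evalE \<psi> \<circ> \<sigma>) f"
  unfolding psubst_def evalE_sum
  unfolding evalE_def[of "evalE \<psi> \<circ> \<sigma>" f]
  by (rule sum.cong[OF refl]) (simp add: evalE_mul evalE_pconst evalE_pprod comp_def)

definition admissible :: "(var \<Rightarrow> 'k::comm_ring_1 EE) \<Rightarrow> bool" where
  "admissible \<psi> \<longleftrightarrow> (\<forall>i. \<psi> (Y i) \<in> deg False \<and> \<psi> (Z i) \<in> deg True)"

lemma one_deg: "1 \<in> deg False"
  using bideg_deg[OF scal_bideg[of 1]] by simp

lemma prod_list_deg: "admissible \<psi> \<Longrightarrow> prod_list (map \<psi> w) \<in> deg (odd (zcount w))"
proof (induction w)
  case Nil then show ?case by (simp add: one_deg zcount_def)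
next
  case (Cons x w)
  show ?case
  proof (cases x)
    case (Y i)
    then have "\<psi> x \<in> deg False" using Cons.prems by (simp add: admissible_def)
    from deg_mult[OF this Cons.IH[OF Cons.prems]] show ?thesis using Y by (simp add: zcount_def)
  next
    case (Z i)
    then have "\<psi> x \<in> deg True" using Cons.prems by (simp add: admissible_def)
    from deg_mult[OF this Cons.IH[OF Cons.prems]] show ?thesis using Z by (simp add: zcount_def)
  qed
qed

lemma deg_sum: "(\<And>i. i \<in> J \<Longrightarrow> F i \<in> deg q) \<Longrightarrow> sum F J \<in> deg q"
  by (induction J rule: infinite_finite_induct) (simp_all add: deg_add)

lemma evalE_homogeneous: "admissible \<psi> \<Longrightarrow> homogeneous d g \<Longrightarrow> evalE \<psi> g \<in> deg (d = 1)"
  unfolding evalE_def homogeneous_def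
proof (rule deg_sum)
  fix w assume "admissible \<psi>" "\<forall>w\<in>Poly_Mapping.keys g. zcount w mod 2 = d" "w \<in> Poly_Mapping.keys g"
  then have "prod_list (map \<psi> w) \<in> deg (d = 1)" using prod_list_deg[of \<psi> w] by (auto simp: odd_iff_mod_2_eq_one)
  then show "scal (Poly_Mapping.lookup g w) * prod_list (map \<psi> w) \<in> deg (d = 1)" by (rule scal_mult_deg)
qed

lemma admissible_subst: "admissible \<psi> \<Longrightarrow> graded_subst \<sigma> \<Longrightarrow> admissible (evalE \<psi> \<circ> \<sigma>)"
  unfolding graded_subst_def admissible_def[of "evalE \<psi> \<circ> \<sigma>"] using evalE_homogeneous[of \<psi>] by fastforce

lemma T2_ideal_vanish:
  assumes "f \<in> T2_ideal S" "\<And>g \<psi>. g \<in> S \<Longrightarrow> admissible \<psi> \<Longrightarrow> evalE \<psi> g = 0"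
  shows "admissible \<psi> \<Longrightarrow> evalE \<psi> f = 0"
  using assms(1)
proof (induction f arbitrary: \<psi> rule: T2_ideal.induct)
  case (gen f) then show ?case using assms(2) by blast
next
  case zero then show ?case by simp
next
  case (add f g) then show ?case by (simp add: evalE_add)
next
  case (lmul f g) then show ?case by (simp add: evalE_mul)
next
  case (rmul f g) then show ?case by (simp add: evalE_mul)
next
  case (endo f \<sigma>)
  have "admissible (evalE \<psi> \<circ> \<sigma>)" using admissible_subst endo by blast
  from endo.IH[OF this] show ?case by (simp add: evalE_psubst comp_def)
qed

text \<open>Admissible evaluations in EE are exactly the evaluations defining T2_id.\<close>
lemma rep_EE_sum: "rep_EE (sum F J) = (\<Sum>i\<in>J. rep_EE (F i))"
  by (induction J rule: infinite_finite_induct) (simp_all add: zero_EE.rep_eq plus_EE.rep_eq)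

lemma rep_EE_prod_list: "(\<And>x. rep_EE (\<psi> x) = \<phi> x) \<Longrightarrow> rep_EE (prod_list (map \<psi> w)) = aprod (map \<phi> w)"
  by (induction w) (simp_all add: aprod_def one_EE.rep_eq times_EE.rep_eq)

lemma T2_id_intro:
  assumes "\<And>\<psi>. admissible \<psi> \<Longrightarrow> evalE \<psi> f = (0 :: 'k::comm_ring_1 EE)"
  shows "f \<in> T2_id"
  unfolding T2_id_def mem_Collect_eq
proof (intro allI impI)
  fix \<phi> :: "var \<Rightarrow> 'k tgr"
  assume h: "\<forall>i. \<phi> (Y i) \<in> A0 \<and> \<phi> (Z i) \<in> A1"
  have finite_keys: "finite_keys (\<phi> x)" for x
  proof (cases x)
    case (Y i)
    then have "\<phi> x \<in> A0" using h by simp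
    then show ?thesis unfolding A0_def finite_keys_def by fastforce
  next
    case (Z i)
    then have "\<phi> x \<in> A1" using h by simp
    then show ?thesis unfolding A1_def finite_keys_def by fastforce
  qed
  define \<psi> where "\<psi> x = abs_EE (\<phi> x)" for x
  have r: "rep_EE (\<psi> x) = \<phi> x" for x using finite_keys by (simp add: \<psi>_def abs_EE_inverse)
  have "admissible \<psi>"
    unfolding admissible_def
  proof
    fix i
    have a0: "\<phi> (Y i) \<in> A0" and a1: "\<phi> (Z i) \<in> A1" using h by auto
    have "\<forall>k\<in>Poly_Mapping.keys (\<phi> (Y i)). odd (card (snd k)) = False"
      using a0 unfolding A0_def by fastforce
    moreover have "\<forall>k\<in>Poly_Mapping.keys (\<phi> (Z i)). odd (card (snd k)) = True"
      using a1 unfolding A1_def by fastforce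
    ultimately show "\<psi> (Y i) \<in> deg False \<and> \<psi> (Z i) \<in> deg True"
      unfolding deg_def supp_in_def by (simp add: r)
  qed
  then have "evalE \<psi> f = 0" by (rule assms)
  then have "rep_EE (evalE \<psi> f) = 0" by (simp add: zero_EE.rep_eq)
  moreover have "rep_EE (evalE \<psi> f) = aeval \<phi> f"
    unfolding evalE_def aeval_def rep_EE_sum
    by (rule sum.cong[OF refl]) (simp add: times_EE.rep_eq scal.rep_eq rep_EE_prod_list[OF r])
  ultimately show "aeval \<phi> f = 0" by simp
qed

abbreviation H00 where "H00 \<equiv> bideg False False"
abbreviation H10 where "H10 \<equiv> bideg True False"
abbreviation H01 where "H01 \<equiv> bideg False True"
abbreviation H11 where "H11 \<equiv> bideg True True"

lemma H00_central:
  assumes "x \<in> H00" "w \<in> deg q"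
  shows "x * w = w * x"
proof -
  obtain u v where w: "w = u + v" "u \<in> bideg False q" "v \<in> bideg True q" using deg_decomp[OF assms(2)] by blast
  have "x * u = u * x" by (rule bideg_commute[OF assms(1) w(2)]) simp
  moreover have "x * v = v * x" by (rule bideg_commute[OF assms(1) w(3)]) simp
  ultimately show ?thesis by (simp add: w distrib_left distrib_right)
qed

lemma H01_commute_deg0:
  assumes "x \<in> H01" "w \<in> deg False"
  shows "x * w = w * x"
proof -
  obtain u v where w: "w = u + v" "u \<in> H00" "v \<in> H10" using deg_decomp[OF assms(2)] by blast
  have "x * u = u * x" by (rule bideg_commute[OF assms(1) w(2)]) simp
  moreover have "x * v = v * x" by (rule bideg_commute[OF assms(1) w(3)]) simp
  ultimately show ?thesis by (simp add: w distrib_left distrib_right)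
qed

lemma H01_anticommute_deg1:
  assumes "x \<in> H01" "w \<in> deg True"
  shows "x * w = - (w * x)"
proof -
  obtain u v where w: "w = u + v" "u \<in> H01" "v \<in> H11" using deg_decomp[OF assms(2)] by blast
  have "x * u = - (u * x)" by (rule bideg_anticommute[OF assms(1) w(2)]) simp
  moreover have "x * v = - (v * x)" by (rule bideg_anticommute[OF assms(1) w(3)]) simp
  ultimately show ?thesis by (simp add: w distrib_left distrib_right)
qed

lemma comm_deg0_deg1:
  assumes "u \<in> H00" "v \<in> H10" "a \<in> H01" "b \<in> H11"
  shows "(u + v) * (a + b) - (a + b) * (u + v) = v * b + v * b"
proof -
  have 1: "a * u = u * a" by (rule bideg_commute[OF assms(3,1)]) simp
  have 2: "b * u = u * b" by (rule bideg_commute[OF assms(4,1)]) simp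
  have 3: "a * v = v * a" by (rule bideg_commute[OF assms(3,2)]) simp
  have 4: "b * v = - (v * b)" by (rule bideg_anticommute[OF assms(4,2)]) simp
  show ?thesis by (simp add: algebra_simps 1 2 3 4)
qed

lemma comm_deg0_deg0:
  assumes "u \<in> H00" "v \<in> H10" "u' \<in> H00" "v' \<in> H10"
  shows "(u + v) * (u' + v') - (u' + v') * (u + v) = v * v' + v * v'"
proof -
  have 1: "u' * u = u * u'" by (rule bideg_commute[OF assms(3,1)]) simp
  have 2: "u' * v = v * u'" by (rule bideg_commute[OF assms(3,2)]) simp
  have 3: "v' * u = u * v'" by (rule bideg_commute[OF assms(4,1)]) simp
  have 4: "v' * v = - (v * v')" by (rule bideg_anticommute[OF assms(4,2)]) simp
  show ?thesis by (simp add: algebra_simps 1 2 3 4)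
qed

lemma circ_deg1_deg1:
  assumes "a \<in> H01" "b \<in> H11" "a' \<in> H01" "b' \<in> H11"
  shows "(a + b) * (a' + b') + (a' + b') * (a + b) = b * b' + b * b'"
proof -
  have 1: "a' * a = - (a * a')" by (rule bideg_anticommute[OF assms(3,1)]) simp
  have 2: "b' * a = - (a * b')" by (rule bideg_anticommute[OF assms(4,1)]) simp
  have 3: "a' * b = - (b * a')" by (rule bideg_anticommute[OF assms(3,2)]) simp
  have 4: "b' * b = b * b'" by (rule bideg_commute[OF assms(4,2)]) simp
  show ?thesis by (simp add: algebra_simps 1 2 3 4)
qed

lemma emonom_square: "finite S \<Longrightarrow> finite T \<Longrightarrow> T \<noteq> {} \<Longrightarrow> emonom S T c * emonom S T c = 0"
  by (simp add: emonom_mult esign_def)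

lemma H01_square:
  assumes "a \<in> H01" shows "a * a = 0"
  using assms[unfolded bideg_def]
proof (induction a rule: supp_in_induct)
  case zero then show ?case by simp
next
  case (add s S T c)
  have sG: "s \<in> H01" using add.hyps(1) by (simp add: bideg_def)
  have mG: "emonom S T c \<in> H01" using bideg_emonom[OF add.hyps(2,3), of c] add.hyps(4) by simp
  have T: "T \<noteq> {}" using add.hyps(4) by auto
  have 1: "emonom S T c * s = - (s * emonom S T c)" by (rule bideg_anticommute[OF mG sG]) simp
  have 2: "emonom S T c * emonom S T c = 0" by (rule emonom_square[OF add.hyps(2,3) T])
  show ?case by (simp add: algebra_simps 1 2 add.IH)
qed

lemma square_deg1:
  assumes "a \<in> H01" "b \<in> H11"
  shows "(a + b) * (a + b) = b * b"
proof -
  have 1: "a * a = 0" by (rule H01_square[OF assms(1)])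
  have 2: "b * a = - (a * b)" by (rule bideg_anticommute[OF assms(2,1)]) simp
  show ?thesis by (simp add: algebra_simps 1 2)
qed

lemma power_add_square_zero:
  fixes s m :: "'a::ring_1"
  assumes sm: "s * m = m * s" and mm: "m * m = 0"
  shows "(s + m) ^ Suc n = s ^ Suc n + of_nat (Suc n) * (s ^ n * m)"
proof (induction n)
  case 0 then show ?case by simp
next
  case (Suc n)
  have c1: "m * s ^ k = s ^ k * m" for k
    using power_commuting_commutes[OF sm, of k] by simp
  have c2: "m * (s ^ n * m) = 0" by (simp add: mult.assoc[symmetric] c1 mult.assoc mm)
  have "(s + m) ^ Suc (Suc n) = (s + m) * (s ^ Suc n + of_nat (Suc n) * (s ^ n * m))"
    by (simp only: power_Suc[of _ "Suc n"] Suc)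
  also have "\<dots> = s ^ Suc (Suc n) + of_nat (Suc n) * (s ^ Suc n * m) + m * s ^ Suc n + of_nat (Suc n) * (m * (s ^ n * m))"
    by (simp add: algebra_simps mult_of_nat_commute)
  also have "\<dots> = s ^ Suc (Suc n) + of_nat (Suc (Suc n)) * (s ^ Suc n * m)"
    by (simp only: c1 c2 mult_zero_right add_0_right) (simp add: algebra_simps)
  finally show ?case .
qed

text \<open>Elements of H11 are sums of commuting square-zero monomials, so by the binomial formula
  b^n is a multiple of n!; in particular b^p = 0 when p! = 0.\<close>
lemma H11_pow_fact:
  assumes "b \<in> H11"
  shows "\<exists>c. b ^ n = of_nat (fact n) * (c :: 'k::comm_ring_1 EE)"
  using assms[unfolded bideg_def] 
proof (induction b arbitrary: n rule: supp_in_induct)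
  case zero
  show ?case by (cases n) (rule exI[of _ 1], simp, rule exI[of _ 0], simp)
next
  case (add s S T c)
  let ?m = "emonom S T c"
  have sG: "s \<in> H11" using add.hyps(1) by (simp add: bideg_def)
  have mG: "?m \<in> H11" using bideg_emonom[OF add.hyps(2,3), of c] add.hyps(4) by simp
  have T: "T \<noteq> {}" using add.hyps(4) by auto
  have sm: "s * ?m = ?m * s" by (rule bideg_commute[OF sG mG]) simp
  have mm: "?m * ?m = 0" by (rule emonom_square[OF add.hyps(2,3) T])
  show ?case
  proof (cases n)
    case 0 then show ?thesis by (intro exI[of _ 1]) simp
  next
    case (Suc k)
    obtain c1 where c1: "s ^ Suc k = of_nat (fact (Suc k)) * c1" using add.IH by blast
    obtain c2 where c2: "s ^ k = of_nat (fact k) * c2" using add.IH by blast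
    have "(s + ?m) ^ Suc k = s ^ Suc k + of_nat (Suc k) * (s ^ k * ?m)" by (rule power_add_square_zero[OF sm mm])
    also have "\<dots> = of_nat (fact (Suc k)) * c1 + of_nat (Suc k) * (of_nat (fact k) * c2 * ?m)" by (simp only: c1 c2)
    also have "\<dots> = of_nat (fact (Suc k)) * c1 + of_nat (fact (Suc k)) * (c2 * ?m)"
      by (simp only: fact_Suc of_nat_id of_nat_mult mult.assoc)
    also have "\<dots> = of_nat (fact (Suc k)) * (c1 + c2 * ?m)"
      by (simp only: distrib_left)
    finally show ?thesis using Suc by blast
  qed
qed

lemma H11_pow_char:
  assumes "b \<in> H11" "of_nat (fact p) = (0 :: 'k::comm_ring_1)"
  shows "b ^ p = (0 :: 'k EE)"
proof -
  obtain c where "b ^ p = of_nat (fact p) * c" using H11_pow_fact[OF assms(1)] by blast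
  moreover have "(of_nat (fact p) :: 'k EE) = 0" by (simp add: of_nat_scal assms(2))
  ultimately show ?thesis by simp
qed

lemma H11_pass:
  assumes "b \<in> H11" "X \<in> bideg P Q"
  shows "\<exists>X'. X' \<in> bideg P Q \<and> b * X = X' * b"
proof (cases "P = Q")
  case True
  then have "b * X = X * b" using bideg_commute[OF assms] by simp
  then show ?thesis using assms(2) by blast
next
  case False
  then have "b * X = - (X * b)" using bideg_anticommute[OF assms] by simp
  then have "b * X = (- X) * b" by simp
  then show ?thesis using bideg_uminus[OF assms(2)] by blast
qed

lemma H11_collect:
  assumes "b \<in> H11" "\<And>i. i \<in> set L \<Longrightarrow> V i \<in> H10"
  shows "\<exists>X P Q. X \<in> bideg P Q \<and> prod_list (map (\<lambda>i. V i * b + V i * b) L) * b ^ m = X * b ^ (m + length L)"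
  using assms(2)
proof (induction L)
  case Nil
  show ?case using scal_bideg[of 1] by (intro exI[of _ 1] exI[of _ False]) simp
next
  case (Cons i L)
  obtain X P Q where X: "X \<in> bideg P Q" "prod_list (map (\<lambda>i. V i * b + V i * b) L) * b ^ m = X * b ^ (m + length L)"
    using Cons by auto
  obtain X' where X': "X' \<in> bideg P Q" "b * X = X' * b" using H11_pass[OF assms(1) X(1)] by blast
  have Vi: "V i \<in> H10" using Cons.prems by simp
  have "prod_list (map (\<lambda>i. V i * b + V i * b) (i # L)) * b ^ m = (V i * b + V i * b) * (X * b ^ (m + length L))"
    using X(2) by (simp add: mult.assoc)
  also have "\<dots> = (V i * (b * X) + V i * (b * X)) * b ^ (m + length L)"
    by (simp add: algebra_simps)
  also have "\<dots> = (V i * X' + V i * X') * b ^ (m + length (i # L))"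
    by (simp add: X'(2) algebra_simps)
  finally have "prod_list (map (\<lambda>i. V i * b + V i * b) (i # L)) * b ^ m = (V i * X' + V i * X') * b ^ (m + length (i # L))" .
  moreover have "V i * X' + V i * X' \<in> bideg (True \<noteq> P) (False \<noteq> Q)"
    using bideg_mult[OF Vi X'(1)] by (intro bideg_add)
  ultimately show ?case by blast
qed

lemma deg_decomp_fun:
  assumes "\<And>i. f i \<in> deg q"
  shows "\<exists>u v. \<forall>i. f i = u i + v i \<and> u i \<in> bideg False q \<and> v i \<in> bideg True q"
proof -
  have "\<exists>u v. f i = u + v \<and> u \<in> bideg False q \<and> v \<in> bideg True q" for i
    using deg_decomp[OF assms] .
  then show ?thesis by metis
qed

section \<open>The generators of I_p vanish\<close>

text \<open>Fix an admissible evaluation \<psi> with \<psi>(Y i) = U i + V i and \<psi>(Z i) = A i + B i.  Every generator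
  evaluates to a polynomial expression in the V i and B i, which vanishes by the sign rule.\<close>

locale decomposition =
  fixes \<psi> :: "var \<Rightarrow> 'k::comm_ring_1 EE" and U V A B :: "nat \<Rightarrow> 'k EE"
  assumes Y_split: "\<And>i. \<psi> (Y i) = U i + V i" and U_H00: "\<And>i. U i \<in> H00" and V_H10: "\<And>i. V i \<in> H10"
    and Z_split: "\<And>i. \<psi> (Z i) = A i + B i" and A_H01: "\<And>i. A i \<in> H01" and B_H11: "\<And>i. B i \<in> H11"
begin

lemma comm_YZ: "\<psi> (Y i) * \<psi> (Z j) - \<psi> (Z j) * \<psi> (Y i) = V i * B j + V i * B j"
  unfolding Y_split Z_split by (rule comm_deg0_deg1) (simp_all add: U_H00 V_H10 A_H01 B_H11)
lemma comm_ZY: "\<psi> (Z j) * \<psi> (Y i) - \<psi> (Y i) * \<psi> (Z j) = - (V i * B j + V i * B j)"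
  using comm_YZ[of i j] by (metis minus_diff_eq)
lemma comm_YY: "\<psi> (Y i) * \<psi> (Y j) - \<psi> (Y j) * \<psi> (Y i) = V i * V j + V i * V j"
  unfolding Y_split by (rule comm_deg0_deg0) (simp_all add: U_H00 V_H10 A_H01 B_H11)
lemma circ_ZZ: "\<psi> (Z i) * \<psi> (Z j) + \<psi> (Z j) * \<psi> (Z i) = B i * B j + B i * B j"
  unfolding Z_split by (rule circ_deg1_deg1) (simp_all add: U_H00 V_H10 A_H01 B_H11)

lemma Y_deg: "\<psi> (Y i) \<in> deg False"
  unfolding Y_split by (rule deg_add; rule bideg_deg) (rule U_H00 V_H10 A_H01 B_H11)+
lemma Z_deg: "\<psi> (Z i) \<in> deg True"
  unfolding Z_split by (rule deg_add; rule bideg_deg) (rule U_H00 V_H10 A_H01 B_H11)+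

lemma VV_H00: "V i * V j + V i * V j \<in> H00"
  using bideg_mult[OF V_H10[of i] V_H10[of j]] by (intro bideg_add) simp_all
lemma VB_H01: "V i * B j + V i * B j \<in> H01"
  using bideg_mult[OF V_H10[of i] B_H11[of j]] by (intro bideg_add) simp_all
lemma BB_H00: "B i * B j + B i * B j \<in> H00"
  using bideg_mult[OF B_H11[of i] B_H11[of j]] by (intro bideg_add) simp_all

lemma V_anticommute: "V i * (V j * w) = - (V j * (V i * w))"
  using bideg_anticommute[OF V_H10[of i] V_H10[of j]] by (simp add: mult.assoc[symmetric])
lemma B_commute: "B i * (B j * w) = B j * (B i * w)"
  using bideg_commute[OF B_H11[of i] B_H11[of j]] by (simp add: mult.assoc[symmetric])
lemma B_V_anticommute: "B i * (V j * w) = - (V j * (B i * w))"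
  using bideg_anticommute[OF B_H11[of i] V_H10[of j]] by (simp add: mult.assoc[symmetric])

lemmas evalE_rules = evalE_pcomm evalE_pcirc evalE_pcomm3 evalE_mul evalE_pvar evalE_add evalE_diff

lemma gen1_yyy: "evalE \<psi> (pcomm3 (y 1) (y 2) (y 3)) = 0"
  by (simp only: evalE_rules comm_YY H00_central[OF VV_H00 Y_deg] diff_self)
lemma gen1_yyz: "evalE \<psi> (pcomm3 (y 1) (y 2) (z 3)) = 0"
  by (simp only: evalE_rules comm_YY H00_central[OF VV_H00 Z_deg] diff_self)
lemma gen2: "evalE \<psi> (pcomm3 (y 1) (z 2) (y 3)) = 0"
  by (simp only: evalE_rules comm_YZ H01_commute_deg0[OF VB_H01 Y_deg] diff_self)
lemma gen3: "evalE \<psi> (pcirc (pcomm (y 1) (z 2)) (z 3)) = 0"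
  by (simp only: evalE_rules comm_YZ H01_anticommute_deg1[OF VB_H01 Z_deg] neg_eq_iff_add_eq_0[symmetric] add.commute)
lemma gen4: "evalE \<psi> (pcomm (pcirc (z 1) (z 2)) (z 3)) = 0"
  by (simp only: evalE_rules circ_ZZ H00_central[OF BB_H00 Z_deg] diff_self)
lemma gen5: "evalE \<psi> (pcirc (z 1) (z 2) \<odot> pcirc (z 3) (z 4) - pcirc (z 1) (z 3) \<odot> pcirc (z 2) (z 4)) = 0"
  by (simp only: evalE_rules circ_ZZ) (simp add: algebra_simps B_commute[of 3 2])
lemma gen6_yy: "evalE \<psi> (pcomm (y 1) (y 2) \<odot> pcomm (y 3) (y 4) + pcomm (y 1) (y 3) \<odot> pcomm (y 2) (y 4)) = 0"
  by (simp only: evalE_rules comm_YY) (simp add: algebra_simps V_anticommute[of 3 2])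
lemma gen6_zy: "evalE \<psi> (pcomm (z 1) (y 2) \<odot> pcomm (y 3) (y 4) + pcomm (z 1) (y 3) \<odot> pcomm (y 2) (y 4)) = 0"
  by (simp only: evalE_rules comm_YY comm_ZY) (simp add: algebra_simps V_anticommute[of 3 2] B_V_anticommute[of "Suc 0" 2] B_V_anticommute[of "Suc 0" 3])
lemma gen6_yz: "evalE \<psi> (pcomm (y 1) (y 2) \<odot> pcomm (y 3) (z 4) + pcomm (y 1) (y 3) \<odot> pcomm (y 2) (z 4)) = 0"
  by (simp only: evalE_rules comm_YY comm_YZ) (simp add: algebra_simps V_anticommute[of 3 2])
lemma gen6_zz: "evalE \<psi> (pcomm (z 1) (y 2) \<odot> pcomm (y 3) (z 4) + pcomm (z 1) (y 3) \<odot> pcomm (y 2) (z 4)) = 0"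
  by (simp only: evalE_rules comm_YZ comm_ZY) (simp add: algebra_simps V_anticommute[of 3 2] B_V_anticommute[of "Suc 0" 2] B_V_anticommute[of "Suc 0" 3])

lemma gen7: "evalE \<psi> (pcomm (y 1) (z 2) \<odot> pcirc (z 3) (z 4) - pcomm (y 1) (z 3) \<odot> pcirc (z 2) (z 4)) = 0"
  by (simp only: evalE_rules circ_ZZ comm_YZ) (simp add: algebra_simps B_commute[of 3 2])

text \<open>Generators (8) and (9): collecting the factors B 1 produces B 1 ^ p, which vanishes when
  p! = 0.\<close>
lemma evalE_Z_power: "prod_list (replicate (2 * n) (\<psi> (Z 1))) = B 1 ^ (2 * n)"
proof -
  have "\<psi> (Z 1) * \<psi> (Z 1) = B 1 * B 1" unfolding Z_split by (rule square_deg1) (simp_all add: U_H00 V_H10 A_H01 B_H11)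
  then show ?thesis by (simp add: prod_list_replicate power_mult power2_eq_square)
qed

lemma evalE_comm_list: "prod_list (map (evalE \<psi>) (map (\<lambda>i. pcomm (y i) (z 1)) L)) = prod_list (map (\<lambda>i. V i * B 1 + V i * B 1) L)"
  by (simp add: comp_def comm_YZ)

lemma gen8:
  assumes "of_nat (fact p) = (0::'k)" "k \<ge> 1" "2 * n + 2 * k - 1 = p"
  shows "evalE \<psi> (pprod (map (\<lambda>i. pcomm (y i) (z 1)) [1..<2*k-1]) \<odot> pcirc (z 2) (z 1) \<odot> pprod (replicate (2*n) (z 1))) = 0"
proof -
  obtain X P Q where X: "X \<in> bideg P Q"
    "prod_list (map (\<lambda>i. V i * B 1 + V i * B 1) [1..<2*k-1]) * B 1 ^ (Suc (2 * n)) = X * B 1 ^ (Suc (2 * n) + length [1..<2*k-1])"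
    using H11_collect[OF B_H11[of 1], of "[1..<2*k-1]" V "Suc (2 * n)"] V_H10 by blast
  have len: "Suc (2 * n) + length [1..<2*k-1] = p" using assms(2,3) by simp
  have c21: "B 2 * B 1 = B 1 * B 2" using bideg_commute[OF B_H11[of 2] B_H11[of 1]] by simp
  have cp: "B 2 * B 1 ^ m = B 1 ^ m * B 2" for m
    using power_commuting_commutes[OF c21[symmetric], of m] by simp
  have circ: "(B 2 * B 1 + B 2 * B 1) * B 1 ^ (2 * n) = B 1 ^ Suc (2 * n) * B 2 + B 1 ^ Suc (2 * n) * B 2"
    by (simp only: distrib_right mult.assoc power_Suc[symmetric] cp)
  have "evalE \<psi> (pprod (map (\<lambda>i. pcomm (y i) (z 1)) [1..<2*k-1]) \<odot> pcirc (z 2) (z 1) \<odot> pprod (replicate (2*n) (z 1)))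
      = prod_list (map (\<lambda>i. V i * B 1 + V i * B 1) [1..<2*k-1]) * ((B 2 * B 1 + B 2 * B 1) * B 1 ^ (2 * n))"
    by (simp only: evalE_mul evalE_pprod evalE_comm_list map_replicate evalE_pvar evalE_Z_power evalE_pcirc circ_ZZ mult.assoc)
  also have "\<dots> = X * B 1 ^ p * B 2 + X * B 1 ^ p * B 2"
    by (simp only: circ distrib_left mult.assoc[symmetric] X(2) len)
  also have "\<dots> = 0" using H11_pow_char[OF B_H11[of 1] assms(1)] by simp
  finally show ?thesis .
qed

lemma gen9:
  assumes "of_nat (fact p) = (0::'k)" "k \<ge> 1" "2 * n + 2 * k - 1 = p"
  shows "evalE \<psi> (pprod (map (\<lambda>i. pcomm (y i) (z 1)) [1..<2*k]) \<odot> pprod (replicate (2*n) (z 1))) = 0"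
proof -
  obtain X P Q where X: "X \<in> bideg P Q"
    "prod_list (map (\<lambda>i. V i * B 1 + V i * B 1) [1..<2*k]) * B 1 ^ (2 * n) = X * B 1 ^ (2 * n + length [1..<2*k])"
    using H11_collect[OF B_H11[of 1], of "[1..<2*k]" V "2 * n"] V_H10 by blast
  have len: "2 * n + length [1..<2*k] = p" using assms(2,3) by simp
  have "evalE \<psi> (pprod (map (\<lambda>i. pcomm (y i) (z 1)) [1..<2*k]) \<odot> pprod (replicate (2*n) (z 1))) = X * B 1 ^ p"
    by (simp only: evalE_mul evalE_pprod evalE_comm_list map_replicate evalE_pvar evalE_Z_power X(2) len)
  also have "\<dots> = 0" using H11_pow_char[OF B_H11[of 1] assms(1)] by simp
  finally show ?thesis .
qed

end

lemma gens_vanish: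
  assumes "g \<in> gens p" "admissible \<psi>" "of_nat (fact p) = (0::'k::comm_ring_1)"
  shows "evalE (\<psi> :: var \<Rightarrow> 'k EE) g = 0"
proof -
  obtain U V where "\<forall>i. \<psi> (Y i) = U i + V i \<and> U i \<in> H00 \<and> V i \<in> H10"
    using deg_decomp_fun[of "\<lambda>i. \<psi> (Y i)" False] assms(2) by (auto simp: admissible_def)
  moreover obtain A B where "\<forall>i. \<psi> (Z i) = A i + B i \<and> A i \<in> H01 \<and> B i \<in> H11"
    using deg_decomp_fun[of "\<lambda>i. \<psi> (Z i)" True] assms(2) by (auto simp: admissible_def)
  ultimately interpret decomposition \<psi> U V A B by unfold_locales auto
  show ?thesis
    using assms(1) unfolding gens_def Un_iff insert_iff singleton_iff mem_Collect_eq empty_iff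
  proof (elim disjE exE conjE)
  qed (simp_all only: gen1_yyy gen1_yyz gen2 gen3 gen4 gen5 gen6_yy gen6_zy gen6_yz gen6_zz gen7 gen8[OF assms(3)] gen9[OF assms(3)])
qed

lemma of_nat_fact_CHAR:
  assumes "CHAR('k::comm_ring_1) = p" "p > 0"
  shows "of_nat (fact p) = (0 :: 'k)"
proof -
  have "fact p = p * fact (p - 1)"
    using assms(2) fact_reduce[of p, where 'a = nat] by simp
  moreover have "(of_nat p :: 'k) = 0"
    using assms(1) of_nat_CHAR by metis
  ultimately show ?thesis by simp
qed

text \<open>The main theorem: I_p consists of graded identities of E_{0*} \<otimes> E_0.  The argument uses
  only that p! = 0 in K.\<close>
theorem lemma13:
  fixes p :: nat
  assumes "infinite (UNIV :: 'k::field set)"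
    and "CHAR('k) = p"
    and "p > 2"
  shows "(I p :: 'k fpoly set) \<subseteq> T2_id"
proof
  fix f :: "'k fpoly" assume f: "f \<in> I p"
  have fact_p: "of_nat (fact p) = (0::'k)"
    using of_nat_fact_CHAR[of p] assms(2,3) by simp
  show "f \<in> T2_id"
  proof (rule T2_id_intro)
    fix \<psi> :: "var \<Rightarrow> 'k EE" assume "admissible \<psi>"
    with f show "evalE \<psi> f = 0"
      unfolding I_def using T2_ideal_vanish gens_vanish[OF _ _ fact_p] by blast
  qed
qed

end
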